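(* For every integer $n\ge 1$, $\mathfrak D^1_{2n}(231,4213)=\{(2,1,4,3,\dots,2n,2n-1)\}$, i.e. the only Dumont permutation of the first kind of length $2n$ avoiding both $231$ and $4213$ is the permutation $\pi$ with $\pi(2i-1)=2i$, $\pi(2i)=2i-1$ for $i=1,\dots,n$.
   Context: A Dumont permutation of the first kind of length $2n$ is a permutation $\pi\in\mathfrak S_{2n}$ such that for every $i=1,\dots,2n$: if $\pi(i)$ is even then $i<2n$ and $\pi(i)>\pi(i+1)$; if $\pi(i)$ is odd then $i=2n$ or $\pi(i)<\pi(i+1)$. $\mathfrak D^1_{2n}$ denotes the set of these. A permutation $\sigma$ contains a pattern $\tau\in\mathfrak S_k$ if some subsequence $(\sigma(i_1),\dots,\sigma(i_k))$, $i_1<\dots<i_k$, is order-isomorphic to $\tau$; otherwise $\sigma$ avoids $\tau$. $\mathfrak D^1_{2n}(T)$ denotes the set of permutations in $\mathfrak D^1_{2n}$ avoiding every pattern in $T$. Permutations are written in one-line notation. *)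

theory Defs
  imports "HOL-Combinatorics.Permutations"
begin

text \<open>Permutations of length m are functions nat => nat that permute {1..m}
(one-line notation: the values at 1, ..., m).\<close>

definition dumont1 :: "nat \<Rightarrow> (nat \<Rightarrow> nat) \<Rightarrow> bool" where
  "dumont1 n \<pi> \<longleftrightarrow> \<pi> permutes {1..2*n} \<and>
     (\<forall>i\<in>{1..2*n}.
        (even (\<pi> i) \<longrightarrow> i < 2*n \<and> \<pi> i > \<pi> (i+1)) \<and>
        (odd (\<pi> i) \<longrightarrow> i = 2*n \<or> \<pi> i < \<pi> (i+1)))"

text \<open>A pattern tau of length k is given as a list (tau(1), ..., tau(k)) of
values in {1..k}. sigma, a permutation of {1..m}, contains tau if there are
indices i_1 < ... < i_k in {1..m} with the subsequence order-isomorphic to tau.\<close>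

definition contains_pattern :: "nat \<Rightarrow> (nat \<Rightarrow> nat) \<Rightarrow> nat list \<Rightarrow> bool" where
  "contains_pattern m \<sigma> \<tau> \<longleftrightarrow>
     (\<exists>idx :: nat \<Rightarrow> nat. strict_mono_on {..<length \<tau>} idx \<and>
        (\<forall>a<length \<tau>. idx a \<in> {1..m}) \<and>
        (\<forall>a<length \<tau>. \<forall>b<length \<tau>. \<sigma> (idx a) < \<sigma> (idx b) \<longleftrightarrow> \<tau> ! a < \<tau> ! b))"

definition avoids_all :: "nat \<Rightarrow> (nat \<Rightarrow> nat) \<Rightarrow> nat list set \<Rightarrow> bool" where
  "avoids_all m \<sigma> T \<longleftrightarrow> (\<forall>\<tau>\<in>T. \<not> contains_pattern m \<sigma> \<tau>)"

definition dumont1_avoid :: "nat \<Rightarrow> nat list set \<Rightarrow> (nat \<Rightarrow> nat) set" where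
  "dumont1_avoid n T = {\<pi>. dumont1 n \<pi> \<and> avoids_all (2*n) \<pi> T}"

definition swap_pairs :: "nat \<Rightarrow> nat \<Rightarrow> nat" where
  "swap_pairs n i = (if i \<in> {1..2*n} then (if odd i then i + 1 else i - 1) else i)"

end

theory Submission
  imports Defs
begin

text \<open>Induction on even prefixes: if \<pi> agrees with 2,1,4,3,... on \<open>{1..K}\<close>, it permutes
the values above K among the positions above K. The even value K+2 must be followed by a
smaller value, necessarily K+1. Were K+2 not at position K+1, the entry just before it would
be an even value e > K+2 (an odd one would have to be smaller than K+2), and wherever K+3
sits it completes a 231 (K+3, e, K+1) or a 4213 (e, K+2, K+1, K+3).\<close>

lemma contains_patternI:
  assumes "sorted_wrt (<) ps" "length ps = length \<tau>" "set ps \<subseteq> {1..m}"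
    and "\<And>a b. a < length \<tau> \<Longrightarrow> b < length \<tau> \<Longrightarrow> \<sigma> (ps ! a) < \<sigma> (ps ! b) \<longleftrightarrow> \<tau> ! a < \<tau> ! b"
  shows "contains_pattern m \<sigma> \<tau>"
  unfolding contains_pattern_def
proof (intro exI[of _ "(!) ps"] conjI allI impI)
  show "strict_mono_on {..<length \<tau>} ((!) ps)"
    using assms(1,2) by (auto simp: strict_mono_on_def sorted_wrt_iff_nth_less)
  show "ps ! a \<in> {1..m}" if "a < length \<tau>" for a
    using assms(2,3) that by (metis nth_mem subsetD)
qed (use assms(4) in auto)

lemma contains_231I:
  assumes "1 \<le> a" "a < b" "b < c" "c \<le> m" "\<sigma> c < \<sigma> a" "\<sigma> a < \<sigma> b"
  shows "contains_pattern m \<sigma> [2,3,1]"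
  by (rule contains_patternI[of "[a,b,c]"]) (use assms in \<open>auto simp: less_Suc_eq numeral_eq_Suc\<close>)

lemma contains_4213I:
  assumes "1 \<le> a" "a < b" "b < c" "c < d" "d \<le> m"
    and "\<sigma> c < \<sigma> b" "\<sigma> b < \<sigma> d" "\<sigma> d < \<sigma> a"
  shows "contains_pattern m \<sigma> [4,2,1,3]"
  by (rule contains_patternI[of "[a,b,c,d]"]) (use assms in \<open>auto simp: less_Suc_eq numeral_eq_Suc\<close>)

lemma swap_pairs_involution: "swap_pairs n (swap_pairs n v) = v"
  by (auto simp: swap_pairs_def split: if_splits; presburger)

lemma swap_pairs_image_prefix:
  assumes "even K" "K \<le> 2*n"
  shows "swap_pairs n ` {1..K} = {1..K}"
proof -
  have maps_to: "swap_pairs n v \<in> {1..K}" if "v \<in> {1..K}" for v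
    using that assms by (auto simp: swap_pairs_def; presburger)
  show ?thesis
    using maps_to swap_pairs_involution by (metis image_subset_iff subset_antisym image_eqI subsetI)
qed

lemma swap_pairs_permutes: "swap_pairs n permutes {1..2*n}"
proof (rule bij_imp_permutes)
  have "inj (swap_pairs n)"
    by (metis injI swap_pairs_involution)
  then show "bij_betw (swap_pairs n) {1..2*n} {1..2*n}"
    using swap_pairs_image_prefix[of "2*n" n] by (simp add: bij_betw_def inj_on_subset[OF _ subset_UNIV])
qed (auto simp: swap_pairs_def)

lemma dumont1_swap_pairs: "dumont1 n (swap_pairs n)"
  unfolding dumont1_def using swap_pairs_permutes
  by (auto simp: swap_pairs_def split: if_splits; presburger)

lemma swap_pairs_pattern_no_distant_inversion:
  assumes "contains_pattern m (swap_pairs n) \<tau>" "a + 1 < b" "b < length \<tau>"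
  shows "\<tau> ! a < \<tau> ! b"
proof -
  obtain idx where mono: "strict_mono_on {..<length \<tau>} idx"
    and iso: "\<And>a b. a < length \<tau> \<Longrightarrow> b < length \<tau> \<Longrightarrow>
                 swap_pairs n (idx a) < swap_pairs n (idx b) \<longleftrightarrow> \<tau> ! a < \<tau> ! b"
    using assms(1) unfolding contains_pattern_def by blast
  have "idx a < idx (a + 1)" "idx (a + 1) < idx b"
    using mono assms(2,3) by (auto simp: strict_mono_on_def)
  moreover have "swap_pairs n (idx a) \<le> idx a + 1" "idx b - 1 \<le> swap_pairs n (idx b)"
    by (auto simp: swap_pairs_def)
  ultimately have "swap_pairs n (idx a) \<le> swap_pairs n (idx b)"
    by linarith
  moreover have "swap_pairs n (idx a) \<noteq> swap_pairs n (idx b)"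
    using \<open>idx a < idx (a + 1)\<close> \<open>idx (a + 1) < idx b\<close> swap_pairs_involution
    by (metis less_irrefl less_trans)
  ultimately have "swap_pairs n (idx a) < swap_pairs n (idx b)"
    by simp
  then show ?thesis
    using iso assms(2,3) by simp
qed

lemma swap_pairs_avoids: "avoids_all m (swap_pairs n) {[2,3,1], [4,2,1,3]}"
  unfolding avoids_all_def
  using swap_pairs_pattern_no_distant_inversion[of m n _ 0 2] by fastforce

lemma dumont1_even_descent:
  assumes "dumont1 n \<pi>" "i \<in> {1..2*n}" "even (\<pi> i)"
  shows "i < 2*n" "\<pi> (i + 1) < \<pi> i"
  using assms by (auto simp: dumont1_def)

lemma dumont1_odd_ascent:
  assumes "dumont1 n \<pi>" "i \<in> {1..2*n}" "odd (\<pi> i)" "i < 2*n"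
  shows "\<pi> i < \<pi> (i + 1)"
  using assms unfolding dumont1_def by fastforce

lemma permutes_interval_suffix:
  fixes \<pi> :: "nat \<Rightarrow> nat"
  assumes "\<pi> permutes {1..m}" "\<pi> ` {1..K} = {1..K}" "K \<le> m"
  shows "\<pi> ` {K<..m} = {K<..m}"
proof -
  have "{K<..m} = {1..m} - {1..K}"
    using assms(3) by auto
  then show ?thesis
    using assms(1,2) by (simp add: image_set_diff permutes_inj permutes_image)
qed

context
  fixes n K :: nat and \<pi> :: "nat \<Rightarrow> nat"
  assumes dumont: "dumont1 n \<pi>" and "even K" and suffix: "\<pi> ` {K<..2*n} = {K<..2*n}"
begin

lemma dumont1_suffix_descent_from_min_even:
  assumes "K + 2 \<le> 2*n"
  obtains j where "j \<in> {K<..2*n}" "j < 2*n" "\<pi> j = K + 2" "\<pi> (j + 1) = K + 1"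
proof -
  have "K + 2 \<in> \<pi> ` {K<..2*n}"
    using suffix assms by simp
  then obtain j where j: "j \<in> {K<..2*n}" "\<pi> j = K + 2"
    by auto
  then have "j < 2*n" "\<pi> (j + 1) < K + 2"
    using dumont1_even_descent[OF dumont, of j] \<open>even K\<close> by auto
  have "j + 1 \<in> {K<..2*n}"
    using j(1) \<open>j < 2*n\<close> by auto
  then have "\<pi> (j + 1) \<in> {K<..2*n}"
    using suffix by blast
  then show ?thesis
    using that j \<open>j < 2*n\<close> \<open>\<pi> (j + 1) < K + 2\<close> by auto
qed

lemma dumont1_suffix_before_descent:
  assumes j: "K + 2 \<le> j" "j < 2*n" "\<pi> j = K + 2" "\<pi> (j + 1) = K + 1"
  shows "K + 4 \<le> \<pi> (j - 1)"
proof -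
  have inj: "inj \<pi>"
    using dumont permutes_inj by (auto simp: dumont1_def)
  have pred: "j - 1 \<in> {1..2*n}" "j - 1 < 2*n" "j - 1 + 1 = j"
    using j(1,2) by auto
  have "j - 1 \<in> {K<..2*n}"
    using j(1,2) by auto
  then have "\<pi> (j - 1) \<in> {K<..2*n}"
    using suffix by blast
  moreover have "\<pi> (j - 1) \<noteq> K + 1" "\<pi> (j - 1) \<noteq> K + 2"
    using inj_eq[OF inj, of "j - 1" "j + 1"] inj_eq[OF inj, of "j - 1" j] j by auto
  moreover have "even (\<pi> (j - 1))"
  proof -
    have "\<not> \<pi> (j - 1) < \<pi> j"
      using calculation j(3) by auto
    then show ?thesis
      using dumont1_odd_ascent[OF dumont pred(1) _ pred(2)] pred(3) by auto
  qed
  ultimately show ?thesis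
    using \<open>even K\<close> by (simp; presburger)
qed

end

lemma dumont1_avoiding_next_pair:
  assumes dumont: "dumont1 n \<pi>" and avoids: "avoids_all (2*n) \<pi> {[2,3,1], [4,2,1,3]}"
    and "even K" "K + 2 \<le> 2*n" and suffix: "\<pi> ` {K<..2*n} = {K<..2*n}"
  shows "\<pi> (K + 1) = K + 2 \<and> \<pi> (K + 2) = K + 1"
proof -
  obtain j where j: "j \<in> {K<..2*n}" "j < 2*n" "\<pi> j = K + 2" "\<pi> (j + 1) = K + 1"
    using dumont1_suffix_descent_from_min_even[OF dumont \<open>even K\<close> suffix \<open>K + 2 \<le> 2*n\<close>] .
  have "j = K + 1"
  proof (rule ccontr)
    assume "j \<noteq> K + 1"
    with j(1) have "K + 2 \<le> j" by auto
    then have e: "K + 4 \<le> \<pi> (j - 1)"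
      using dumont1_suffix_before_descent[OF dumont \<open>even K\<close> suffix] j(2-4) by blast
    have "j - 1 \<in> {K<..2*n}"
      using \<open>K + 2 \<le> j\<close> j(2) by auto
    then have "\<pi> (j - 1) \<in> {K<..2*n}"
      using suffix by blast
    with e have "K + 3 \<in> \<pi> ` {K<..2*n}"
      using suffix by simp
    then obtain d where d: "d \<in> {K<..2*n}" "\<pi> d = K + 3"
      by auto
    then have "d \<noteq> j - 1" "d \<noteq> j" "d \<noteq> j + 1"
      using j(3,4) e by auto
    then consider "d < j - 1" | "j + 1 < d"
      by linarith
    then show False
    proof cases
      case 1
      then have "contains_pattern (2*n) \<pi> [2,3,1]"
        by (intro contains_231I[of d "j - 1" "j + 1"]) (use d j e in auto)
      then show False
        using avoids by (simp add: avoids_all_def)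
    next
      case 2
      then have "contains_pattern (2*n) \<pi> [4,2,1,3]"
        by (intro contains_4213I[of "j - 1" j "j + 1" d]) (use d j e \<open>K + 2 \<le> j\<close> in auto)
      then show False
        using avoids by (simp add: avoids_all_def)
    qed
  qed
  then show ?thesis
    using j(3,4) by simp
qed

lemma dumont1_avoiding_prefix:
  assumes dumont: "dumont1 n \<pi>" and avoids: "avoids_all (2*n) \<pi> {[2,3,1], [4,2,1,3]}"
  shows "k \<le> n \<Longrightarrow> \<forall>i\<in>{1..2*k}. \<pi> i = swap_pairs n i"
proof (induction k)
  case 0
  then show ?case by simp
next
  case (Suc k)
  then have prefix: "\<forall>i\<in>{1..2*k}. \<pi> i = swap_pairs n i"
    by simp
  have "\<pi> ` {1..2*k} = swap_pairs n ` {1..2*k}"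
    using prefix by (intro image_cong) auto
  also have "\<dots> = {1..2*k}"
    using Suc.prems by (intro swap_pairs_image_prefix) auto
  finally have "\<pi> ` {1..2*k} = {1..2*k}" .
  then have "\<pi> ` {2*k<..2*n} = {2*k<..2*n}"
    using dumont Suc.prems by (intro permutes_interval_suffix) (auto simp: dumont1_def)
  then have "\<pi> (2*k + 1) = 2*k + 2 \<and> \<pi> (2*k + 2) = 2*k + 1"
    using dumont1_avoiding_next_pair[OF dumont avoids, of "2*k"] Suc.prems by simp
  moreover have "swap_pairs n (2*k + 1) = 2*k + 2" "swap_pairs n (2*k + 2) = 2*k + 1"
    using Suc.prems by (auto simp: swap_pairs_def)
  ultimately show ?case
    using prefix by (auto simp: le_Suc_eq)
qed

theorem theorem3p8:
  fixes n :: nat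
  assumes "n \<ge> 1"
  shows "dumont1_avoid n {[2,3,1], [4,2,1,3]} = {swap_pairs n}"
proof -
  have "\<pi> = swap_pairs n" if "dumont1 n \<pi>" "avoids_all (2*n) \<pi> {[2,3,1], [4,2,1,3]}" for \<pi>
  proof
    fix i
    show "\<pi> i = swap_pairs n i"
    proof (cases "i \<in> {1..2*n}")
      case True
      then show ?thesis
        using dumont1_avoiding_prefix[OF that order_refl] by blast
    next
      case False
      then show ?thesis
        using that(1) permutes_not_in swap_pairs_permutes[of n] by (metis dumont1_def)
    qed
  qed
  then show ?thesis
    using dumont1_swap_pairs swap_pairs_avoids by (auto simp: dumont1_avoid_def)
qed

end
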